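(* Let $m\geq n\geq 6$ and $S\subseteq V(K_m\Box K_n)$. If every row and every column of $K_m\Box K_n$ contains at least two elements of $S$ and every quadruple contains at least one element of $S$, then $S$ is a $\{2\}$-resolving set of $K_m\Box K_n$.
   Context: $K_m\Box K_n$ has vertices $av$ with $a\in V(K_m)$, $v\in V(K_n)$; distinct $av,bu$ are adjacent iff $a=b$ or $u=v$. A column is a set $\{au: u\in V(K_n)\}$ for fixed $a$; a row is a set $\{au: a\in V(K_m)\}$ for fixed $u$. A quadruple is a set $\{av,au,bv,bu\}$ with $a\neq b$, $u\neq v$. $d$ is the shortest-path distance, $d(s,X)=\min_{x\in X}d(s,x)$, $\mathcal{D}_S(X)=(d(s_1,X),\dots,d(s_k,X))$ for $S=\{s_1,\dots,s_k\}$. $S$ is a $\{2\}$-resolving set if $\mathcal{D}_S(X)\neq\mathcal{D}_S(Y)$ for all distinct nonempty vertex sets $X,Y$ with $|X|,|Y|\leq 2$. *)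

theory Defs
  imports Main
begin

definition rook_verts :: "nat \<Rightarrow> nat \<Rightarrow> (nat \<times> nat) set" where
  "rook_verts m n = {..<m} \<times> {..<n}"

definition rook_adj :: "nat \<times> nat \<Rightarrow> nat \<times> nat \<Rightarrow> bool" where
  "rook_adj x y \<longleftrightarrow> x \<noteq> y \<and> (fst x = fst y \<or> snd x = snd y)"

definition has_walk :: "('a \<Rightarrow> 'a \<Rightarrow> bool) \<Rightarrow> 'a set \<Rightarrow> 'a \<Rightarrow> 'a \<Rightarrow> nat \<Rightarrow> bool" where
  "has_walk E V x y k \<longleftrightarrow> (\<exists>p. length p = Suc k \<and> hd p = x \<and> last p = y \<and> set p \<subseteq> V
        \<and> (\<forall>i<k. E (p ! i) (p ! Suc i)))"

definition gdist :: "('a \<Rightarrow> 'a \<Rightarrow> bool) \<Rightarrow> 'a set \<Rightarrow> 'a \<Rightarrow> 'a \<Rightarrow> nat" where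
  "gdist E V x y = (LEAST k. has_walk E V x y k)"

definition gdist_set :: "('a \<Rightarrow> 'a \<Rightarrow> bool) \<Rightarrow> 'a set \<Rightarrow> 'a \<Rightarrow> 'a set \<Rightarrow> nat" where
  "gdist_set E V s X = Min ((\<lambda>x. gdist E V s x) ` X)"

definition two_resolving :: "('a \<Rightarrow> 'a \<Rightarrow> bool) \<Rightarrow> 'a set \<Rightarrow> 'a set \<Rightarrow> bool" where
  "two_resolving E V S \<longleftrightarrow> S \<subseteq> V \<and>
     (\<forall>X Y. X \<subseteq> V \<and> Y \<subseteq> V \<and> X \<noteq> {} \<and> Y \<noteq> {} \<and> card X \<le> 2 \<and> card Y \<le> 2 \<and> X \<noteq> Y
        \<longrightarrow> (\<exists>s\<in>S. gdist_set E V s X \<noteq> gdist_set E V s Y))"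

end

theory Submission
  imports Defs
begin

(* Distances in K_m \<box> K_n are 0, 1 or 2, so D_S(X) = D_S(Y) says exactly that every s \<in> S
   lies in X iff it lies in Y, and shares a row or column with X iff it does with Y.
   Suppose this holds for X = {p, q} and Y = {r, t}, and the row of p contains no vertex of Y.
   Then the S-vertices of that row lie in the columns of r and t, so p \<notin> S, and the S-vertices
   of the column of p lie in the rows of r and t; as every line holds two vertices of S, r and t
   lie in distinct rows. But each of these rows must be the row of q: otherwise the quadruple
   spanned by it, the row of p and two columns avoiding those of p, q, r, t (possible as m \<ge> 6)
   misses S. Hence X and Y occupy the same rows and, transposing, the same columns; a last
   quadruple excludes that Y is the other diagonal of the rectangle spanned by X. *)

lemma has_walk_0_iff: "has_walk E V x y 0 \<longleftrightarrow> x = y \<and> x \<in> V"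
proof
  assume "has_walk E V x y 0"
  then obtain p where "length p = Suc 0" "hd p = x" "last p = y" "set p \<subseteq> V"
    unfolding has_walk_def by blast
  then show "x = y \<and> x \<in> V" by (cases p) auto
next
  assume "x = y \<and> x \<in> V"
  then show "has_walk E V x y 0"
    unfolding has_walk_def by (intro exI[of _ "[x]"]) auto
qed

lemma has_walk_Suc_0_iff: "has_walk E V x y (Suc 0) \<longleftrightarrow> E x y \<and> x \<in> V \<and> y \<in> V"
proof
  assume "has_walk E V x y (Suc 0)"
  then obtain p where "length p = Suc (Suc 0)" "hd p = x" "last p = y" "set p \<subseteq> V"
      "E (p ! 0) (p ! Suc 0)"
    unfolding has_walk_def by auto
  then show "E x y \<and> x \<in> V \<and> y \<in> V"
    by (cases p; cases "tl p") auto
next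
  assume "E x y \<and> x \<in> V \<and> y \<in> V"
  then show "has_walk E V x y (Suc 0)"
    unfolding has_walk_def by (intro exI[of _ "[x, y]"]) auto
qed

lemma has_walk_2I:
  assumes "{x, z, y} \<subseteq> V" "E x z" "E z y"
  shows "has_walk E V x y 2"
  unfolding has_walk_def
proof (intro exI[of _ "[x, z, y]"] conjI allI impI)
  fix i :: nat assume "i < 2"
  then consider "i = 0" | "i = 1" by linarith
  then show "E ([x, z, y] ! i) ([x, z, y] ! Suc i)" by cases (use assms in auto)
qed (use assms in auto)

lemma gdist_eqI:
  assumes "has_walk E V x y k" "\<And>j. j < k \<Longrightarrow> \<not> has_walk E V x y j"
  shows "gdist E V x y = k"
  unfolding gdist_def by (rule Least_equality) (use assms in \<open>auto simp: not_less[symmetric]\<close>)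

lemma gdist_set_le_iff:
  assumes "finite X" "X \<noteq> {}"
  shows "gdist_set E V s X \<le> k \<longleftrightarrow> (\<exists>x\<in>X. gdist E V s x \<le> k)"
  unfolding gdist_set_def using assms by (simp add: Min_le_iff)

lemma finite_rook_verts: "finite (rook_verts m n)"
  unfolding rook_verts_def by simp

lemma rook_gdist:
  assumes "x \<in> rook_verts m n" "y \<in> rook_verts m n"
  shows "gdist rook_adj (rook_verts m n) x y =
           (if x = y then 0 else if fst x = fst y \<or> snd x = snd y then 1 else 2)"
proof -
  let ?V = "rook_verts m n"
  consider "x = y" | "x \<noteq> y" "fst x = fst y \<or> snd x = snd y"
    | "fst x \<noteq> fst y" "snd x \<noteq> snd y" by fastforce
  then show ?thesis
  proof cases
    case 1
    then show ?thesis using assms by (intro gdist_eqI) (auto simp: has_walk_0_iff)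
  next
    case 2
    then have "has_walk rook_adj ?V x y (Suc 0)"
      using assms by (auto simp: has_walk_Suc_0_iff rook_adj_def)
    then show ?thesis using 2 by (auto intro: gdist_eqI simp: has_walk_0_iff)
  next
    case 3
    let ?z = "(fst x, snd y)"
    have "?z \<in> ?V" using assms by (auto simp: rook_verts_def)
    then have "has_walk rook_adj ?V x y 2"
      using 3 assms by (intro has_walk_2I) (auto simp: rook_adj_def prod_eq_iff)
    moreover have "\<not> has_walk rook_adj ?V x y j" if "j < 2" for j
      using 3 that by (auto simp: less_2_cases_iff has_walk_0_iff has_walk_Suc_0_iff rook_adj_def)
    ultimately show ?thesis using 3 by (auto intro: gdist_eqI)
  qed
qed

definition shares_line :: "nat \<times> nat \<Rightarrow> (nat \<times> nat) set \<Rightarrow> bool" where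
  "shares_line s X \<longleftrightarrow> (\<exists>x\<in>X. fst s = fst x \<or> snd s = snd x)"

lemma shares_line_empty [simp]: "\<not> shares_line s {}"
  unfolding shares_line_def by simp

lemma shares_line_insert [simp]:
  "shares_line s (insert x X) \<longleftrightarrow> fst s = fst x \<or> snd s = snd x \<or> shares_line s X"
  unfolding shares_line_def by auto

lemma shares_line_swap: "shares_line (prod.swap s) (prod.swap ` X) \<longleftrightarrow> shares_line s X"
  unfolding shares_line_def by auto

lemma rook_gdist_set_eq_0_iff:
  assumes "s \<in> rook_verts m n" "X \<subseteq> rook_verts m n" "finite X" "X \<noteq> {}"
  shows "gdist_set rook_adj (rook_verts m n) s X = 0 \<longleftrightarrow> s \<in> X"
proof -
  have "gdist rook_adj (rook_verts m n) s x \<le> 0 \<longleftrightarrow> s = x" if "x \<in> X" for x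
  proof -
    have "x \<in> rook_verts m n" using that assms(2) by blast
    then show ?thesis using rook_gdist[OF assms(1)] by simp
  qed
  then show ?thesis using gdist_set_le_iff[OF assms(3,4), of _ _ s 0] by auto
qed

lemma rook_gdist_set_le_1_iff:
  assumes "s \<in> rook_verts m n" "X \<subseteq> rook_verts m n" "finite X" "X \<noteq> {}"
  shows "gdist_set rook_adj (rook_verts m n) s X \<le> 1 \<longleftrightarrow> shares_line s X"
proof -
  have "gdist rook_adj (rook_verts m n) s x \<le> 1 \<longleftrightarrow> fst s = fst x \<or> snd s = snd x"
    if "x \<in> X" for x
  proof -
    have "x \<in> rook_verts m n" using that assms(2) by blast
    then show ?thesis using rook_gdist[OF assms(1)] by simp
  qed
  then show ?thesis using gdist_set_le_iff[OF assms(3,4), of _ _ s 1]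
    unfolding shares_line_def by auto
qed

lemma card_le_2_obtain:
  assumes "finite X" "X \<noteq> {}" "card X \<le> 2"
  obtains p q where "X = {p, q}"
proof -
  have "card X = 1 \<or> card X = 2" using assms card_gt_0_iff[of X] by linarith
  then show thesis
  proof
    assume "card X = 1"
    then obtain p where "X = {p}" by (rule card_1_singletonE)
    then show thesis using that[of p p] by simp
  next
    assume "card X = 2"
    then show thesis using that by (auto simp: card_2_iff)
  qed
qed

lemma subset_doubleton_card_ge_2:
  assumes "A \<subseteq> {x, y}" "2 \<le> card A"
  shows "A = {x, y}" "x \<noteq> y"
proof -
  have "card A \<le> card {x, y}" using assms(1) by (intro card_mono) auto
  moreover have "card {x, y} \<le> 2" by (simp add: card_insert_if)
  ultimately have "card A = card {x, y}" "card {x, y} = 2" using assms(2) by simp_all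
  then show "A = {x, y}" using assms(1) by (intro card_subset_eq) auto
  show "x \<noteq> y" using \<open>card {x, y} = 2\<close> by auto
qed

lemma obtain_two_below_avoiding:
  fixes F :: "nat set"
  assumes "finite F" "card F + 2 \<le> m"
  obtains c c' where "c < m" "c' < m" "c \<noteq> c'" "c \<notin> F" "c' \<notin> F"
proof -
  have "card {..<m} - card F \<le> card ({..<m} - F)"
    using assms(1) by (rule diff_card_le_card_Diff)
  then have "Suc (Suc 0) \<le> card ({..<m} - F)" using assms(2) by simp
  then obtain c B where "{..<m} - F = insert c B" "c \<notin> B" "Suc 0 \<le> card B"
    by (auto simp: card_le_Suc_iff)
  then obtain c' where "c' \<in> B" by (auto simp: card_le_Suc_iff)
  then show thesis using that \<open>{..<m} - F = insert c B\<close> \<open>c \<notin> B\<close> by blast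
qed

definition rook_unresolved ::
    "(nat \<times> nat) set \<Rightarrow> (nat \<times> nat) set \<Rightarrow> (nat \<times> nat) set \<Rightarrow> bool" where
  "rook_unresolved S X Y \<longleftrightarrow>
     (\<forall>s\<in>S. (s \<in> X \<longleftrightarrow> s \<in> Y) \<and> (shares_line s X \<longleftrightarrow> shares_line s Y))"

lemma rook_unresolved_memD:
  "rook_unresolved S X Y \<Longrightarrow> s \<in> S \<Longrightarrow> s \<in> X \<longleftrightarrow> s \<in> Y"
  unfolding rook_unresolved_def by blast

lemma rook_unresolved_shares_lineD:
  "rook_unresolved S X Y \<Longrightarrow> s \<in> S \<Longrightarrow> shares_line s X \<longleftrightarrow> shares_line s Y"
  unfolding rook_unresolved_def by blast

lemma rook_unresolved_sym: "rook_unresolved S X Y \<Longrightarrow> rook_unresolved S Y X"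
  unfolding rook_unresolved_def by blast

lemma rook_unresolved_swap:
  "rook_unresolved S X Y \<Longrightarrow> rook_unresolved (prod.swap ` S) (prod.swap ` X) (prod.swap ` Y)"
  unfolding rook_unresolved_def by (auto simp: shares_line_swap)

lemma rook_unresolved_if_gdist_set_eq:
  assumes "S \<subseteq> rook_verts m n" "X \<subseteq> rook_verts m n" "Y \<subseteq> rook_verts m n"
    and "X \<noteq> {}" "Y \<noteq> {}"
    and eq: "\<forall>s\<in>S. gdist_set rook_adj (rook_verts m n) s X =
                     gdist_set rook_adj (rook_verts m n) s Y"
  shows "rook_unresolved S X Y"
  unfolding rook_unresolved_def
proof
  fix s assume "s \<in> S"
  then have s: "s \<in> rook_verts m n" using assms(1) by blast
  have "finite X" "finite Y" using assms(2,3) finite_rook_verts by (auto intro: finite_subset)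
  note X = assms(2) \<open>finite X\<close> assms(4) and Y = assms(3) \<open>finite Y\<close> assms(5)
  have "gdist_set rook_adj (rook_verts m n) s X = gdist_set rook_adj (rook_verts m n) s Y"
    using eq \<open>s \<in> S\<close> by blast
  then show "(s \<in> X \<longleftrightarrow> s \<in> Y) \<and> (shares_line s X \<longleftrightarrow> shares_line s Y)"
    using rook_gdist_set_eq_0_iff[OF s X] rook_gdist_set_eq_0_iff[OF s Y]
      rook_gdist_set_le_1_iff[OF s X] rook_gdist_set_le_1_iff[OF s Y] by simp
qed

lemma row_subset_if_unresolved:
  assumes "rook_unresolved S {p, q} {r, t}" and "snd p \<notin> {snd r, snd t}"
  shows "S \<inter> {(c, snd p) | c. c < m} \<subseteq> {(fst r, snd p), (fst t, snd p)}"
proof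
  fix s assume s: "s \<in> S \<inter> {(c, snd p) | c. c < m}"
  then have "shares_line s {p, q}" by auto
  then have "shares_line s {r, t}" using rook_unresolved_shares_lineD[OF assms(1)] s by blast
  then show "s \<in> {(fst r, snd p), (fst t, snd p)}" using s assms(2) by auto
qed

lemma column_subset_if_unresolved:
  assumes "rook_unresolved S {p, q} {r, t}" and "fst p \<notin> {fst r, fst t}"
  shows "S \<inter> {(fst p, u) | u. u < n} \<subseteq> {(fst p, snd r), (fst p, snd t)}"
proof
  fix s assume s: "s \<in> S \<inter> {(fst p, u) | u. u < n}"
  then have "shares_line s {p, q}" by auto
  then have "shares_line s {r, t}" using rook_unresolved_shares_lineD[OF assms(1)] s by blast
  then show "s \<in> {(fst p, snd r), (fst p, snd t)}" using s assms(2) by auto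
qed

locale rook_cover =
  fixes m n :: nat and S :: "(nat \<times> nat) set"
  assumes S_verts: "S \<subseteq> rook_verts m n"
    and column_card: "\<forall>a<m. card (S \<inter> {(a, u) | u. u < n}) \<ge> 2"
    and row_card: "\<forall>u<n. card (S \<inter> {(a, u) | a. a < m}) \<ge> 2"
    and quadruple: "\<forall>a<m. \<forall>b<m. \<forall>u<n. \<forall>v<n. a \<noteq> b \<and> u \<noteq> v \<longrightarrow>
           S \<inter> {(a, v), (a, u), (b, v), (b, u)} \<noteq> {}"
begin

lemma transpose: "rook_cover n m (prod.swap ` S)"
proof
  have swap_column:
      "prod.swap ` S \<inter> {(a, u) | u. u < k} = prod.swap ` (S \<inter> {(u, a) | u. u < k})"
    and swap_row:
      "prod.swap ` S \<inter> {(u, a) | u. u < k} = prod.swap ` (S \<inter> {(a, u) | u. u < k})"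
    for a k by auto
  show "prod.swap ` S \<subseteq> rook_verts n m" using S_verts by (auto simp: rook_verts_def)
  show "\<forall>a<n. 2 \<le> card (prod.swap ` S \<inter> {(a, u) | u. u < m})"
    using row_card by (simp add: swap_column card_image)
  show "\<forall>u<m. 2 \<le> card (prod.swap ` S \<inter> {(a, u) | a. a < n})"
    using column_card by (simp add: swap_row card_image)
  show "\<forall>a<n. \<forall>b<n. \<forall>u<m. \<forall>v<m. a \<noteq> b \<and> u \<noteq> v \<longrightarrow>
      prod.swap ` S \<inter> {(a, v), (a, u), (b, v), (b, u)} \<noteq> {}"
  proof (intro allI impI)
    fix a b u v assume "a < n" "b < n" "u < m" "v < m" "a \<noteq> b \<and> u \<noteq> v"
    then have "S \<inter> {(v, a), (v, b), (u, a), (u, b)} \<noteq> {}"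
      by (intro quadruple[rule_format]) auto
    then show "prod.swap ` S \<inter> {(a, v), (a, u), (b, v), (b, u)} \<noteq> {}" by auto
  qed
qed

lemma snd_eq_if_unresolved:
  assumes "6 \<le> m" and verts: "{p, q, r, t} \<subseteq> rook_verts m n"
    and unres: "rook_unresolved S {p, q} {r, t}"
    and p_row: "snd p \<notin> {snd r, snd t}" and y: "y \<in> {r, t}"
  shows "snd y = snd q"
proof (rule ccontr)
  assume "snd y \<noteq> snd q"
  have card_F: "card {fst p, fst q, fst r, fst t} + 2 \<le> m"
    using \<open>6 \<le> m\<close> by (simp add: card_insert_if)
  obtain c c' where c: "c < m" "c' < m" "c \<noteq> c'" "c \<notin> {fst p, fst q, fst r, fst t}"
    "c' \<notin> {fst p, fst q, fst r, fst t}"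
    by (rule obtain_two_below_avoiding[OF _ card_F]) simp
  have "(d, snd y) \<notin> S" if "d \<notin> {fst p, fst q, fst r, fst t}" for d
  proof
    assume "(d, snd y) \<in> S"
    moreover have "shares_line (d, snd y) {r, t}" using y by auto
    ultimately have "shares_line (d, snd y) {p, q}"
      using rook_unresolved_shares_lineD[OF unres] by blast
    then show False using that y p_row \<open>snd y \<noteq> snd q\<close> by auto
  qed
  moreover have "(d, snd p) \<notin> S" if "d < m" "d \<notin> {fst r, fst t}" for d
    using row_subset_if_unresolved[OF unres p_row] that by blast
  moreover have "snd y < n" "snd p < n" "snd y \<noteq> snd p"
    using y verts p_row by (auto simp: rook_verts_def)
  then have "S \<inter> {(c, snd y), (c, snd p), (c', snd y), (c', snd p)} \<noteq> {}"
    by (intro quadruple[rule_format]) (use c in auto)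
  ultimately show False using c by auto
qed

lemma row_mem_if_unresolved:
  assumes "6 \<le> m" and verts: "{p, q, r, t} \<subseteq> rook_verts m n"
    and unres: "rook_unresolved S {p, q} {r, t}"
  shows "snd p \<in> {snd r, snd t}"
proof (rule ccontr)
  assume p_row: "snd p \<notin> {snd r, snd t}"
  have "fst p < m" "snd p < n" using verts by (auto simp: rook_verts_def)
  have "2 \<le> card (S \<inter> {(c, snd p) | c. c < m})" using row_card \<open>snd p < n\<close> by blast
  then have "S \<inter> {(c, snd p) | c. c < m} = {(fst r, snd p), (fst t, snd p)}"
    using row_subset_if_unresolved[OF unres p_row] by (intro subset_doubleton_card_ge_2)
  moreover have "p \<notin> S" using rook_unresolved_memD[OF unres, of p] p_row by auto
  ultimately have p_column: "fst p \<notin> {fst r, fst t}" by (cases p) auto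
  have "2 \<le> card (S \<inter> {(fst p, u) | u. u < n})" using column_card \<open>fst p < m\<close> by blast
  then have "(fst p, snd r) \<noteq> (fst p, snd t)"
    using column_subset_if_unresolved[OF unres p_column] by (intro subset_doubleton_card_ge_2(2))
  moreover have "snd r = snd q" "snd t = snd q"
    using snd_eq_if_unresolved[OF assms p_row] by auto
  ultimately show False by simp
qed

lemma column_mem_if_unresolved:
  assumes "6 \<le> n" and "{p, q, r, t} \<subseteq> rook_verts m n"
    and "rook_unresolved S {p, q} {r, t}"
  shows "fst p \<in> {fst r, fst t}"
proof -
  interpret transposed: rook_cover n m "prod.swap ` S" by (rule transpose)
  have "snd (prod.swap p) \<in> {snd (prod.swap r), snd (prod.swap t)}"
    using assms rook_unresolved_swap[OF assms(3)]
    by (intro transposed.row_mem_if_unresolved) (auto simp: rook_verts_def)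
  then show ?thesis by simp
qed

lemma doubleton_eq_if_unresolved:
  assumes "6 \<le> m" "6 \<le> n" and verts: "{p, q, r, t} \<subseteq> rook_verts m n"
    and unres: "rook_unresolved S {p, q} {r, t}"
  shows "{p, q} = {r, t}"
proof -
  have unres': "rook_unresolved S {q, p} {r, t}" "rook_unresolved S {r, t} {p, q}"
    "rook_unresolved S {t, r} {p, q}"
    using unres rook_unresolved_sym by (simp_all add: insert_commute)
  have verts': "{q, p, r, t} \<subseteq> rook_verts m n" "{r, t, p, q} \<subseteq> rook_verts m n"
    "{t, r, p, q} \<subseteq> rook_verts m n" using verts by auto
  have rows: "{snd p, snd q} = {snd r, snd t}"
    using row_mem_if_unresolved[OF \<open>6 \<le> m\<close> verts unres]
      row_mem_if_unresolved[OF \<open>6 \<le> m\<close> verts'(1) unres'(1)]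
      row_mem_if_unresolved[OF \<open>6 \<le> m\<close> verts'(2) unres'(2)]
      row_mem_if_unresolved[OF \<open>6 \<le> m\<close> verts'(3) unres'(3)] by auto
  have columns: "{fst p, fst q} = {fst r, fst t}"
    using column_mem_if_unresolved[OF \<open>6 \<le> n\<close> verts unres]
      column_mem_if_unresolved[OF \<open>6 \<le> n\<close> verts'(1) unres'(1)]
      column_mem_if_unresolved[OF \<open>6 \<le> n\<close> verts'(2) unres'(2)]
      column_mem_if_unresolved[OF \<open>6 \<le> n\<close> verts'(3) unres'(3)] by auto
  obtain a u b v where p: "p = (a, u)" and q: "q = (b, v)" by fastforce
  show ?thesis
  proof (cases "a = b \<or> u = v")
    case True
    then show ?thesis using rows columns p q by (cases r, cases t) (auto simp: doubleton_eq_iff)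
  next
    case False
    then have "{r, t} = {(a, u), (b, v)} \<or> {r, t} = {(a, v), (b, u)}"
      using rows columns p q by (cases r, cases t) (auto simp: doubleton_eq_iff)
    moreover have "S \<inter> {(a, v), (a, u), (b, v), (b, u)} \<noteq> {}"
      using False verts p q by (intro quadruple[rule_format]) (auto simp: rook_verts_def)
    ultimately show ?thesis
      using rook_unresolved_memD[OF unres] False p q by (auto simp: doubleton_eq_iff)
  qed
qed

lemma two_resolving_if_ge_6:
  assumes "6 \<le> m" "6 \<le> n"
  shows "two_resolving rook_adj (rook_verts m n) S"
  unfolding two_resolving_def
proof (intro conjI allI impI)
  fix X Y
  assume "X \<subseteq> rook_verts m n \<and> Y \<subseteq> rook_verts m n \<and> X \<noteq> {} \<and> Y \<noteq> {} \<and>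
    card X \<le> 2 \<and> card Y \<le> 2 \<and> X \<noteq> Y"
  then have XY: "X \<subseteq> rook_verts m n" "Y \<subseteq> rook_verts m n" "X \<noteq> {}" "Y \<noteq> {}"
    "card X \<le> 2" "card Y \<le> 2" "X \<noteq> Y" by simp_all
  have "finite X" "finite Y" using XY(1,2) finite_rook_verts by (auto intro: finite_subset)
  obtain p q where X: "X = {p, q}" by (rule card_le_2_obtain[OF \<open>finite X\<close> XY(3,5)])
  obtain r t where Y: "Y = {r, t}" by (rule card_le_2_obtain[OF \<open>finite Y\<close> XY(4,6)])
  show "\<exists>s\<in>S. gdist_set rook_adj (rook_verts m n) s X \<noteq>
              gdist_set rook_adj (rook_verts m n) s Y"
  proof (rule ccontr)
    assume "\<not> ?thesis"
    then have "rook_unresolved S {p, q} {r, t}"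
      using rook_unresolved_if_gdist_set_eq[OF S_verts XY(1-4)] X Y by auto
    moreover have "{p, q, r, t} \<subseteq> rook_verts m n" using XY(1,2) X Y by blast
    ultimately show False using doubleton_eq_if_unresolved[OF assms] XY(7) X Y by blast
  qed
qed (fact S_verts)

end

theorem mainTheorem12:
  fixes m n :: nat and S :: "(nat \<times> nat) set"
  assumes "n \<ge> 6" and "m \<ge> n"
    and "S \<subseteq> rook_verts m n"
    and "\<forall>a<m. card (S \<inter> {(a, u) | u. u < n}) \<ge> 2"
    and "\<forall>u<n. card (S \<inter> {(a, u) | a. a < m}) \<ge> 2"
    and "\<forall>a<m. \<forall>b<m. \<forall>u<n. \<forall>v<n. a \<noteq> b \<and> u \<noteq> v \<longrightarrow>
           S \<inter> {(a, v), (a, u), (b, v), (b, u)} \<noteq> {}"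
  shows "two_resolving rook_adj (rook_verts m n) S"
proof -
  interpret rook_cover m n S using assms(3-6) by unfold_locales
  show ?thesis using assms(1,2) by (intro two_resolving_if_ge_6) simp_all
qed

end
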